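(* Let $r,p$ be positive integers with $p$ prime, and let $k$ be the largest integer such that $p>2k^2r^2$. Then there exists a set $S\subseteq\{0,\dots,p-1\}$ of size at least $k$ that does not contain an $r$-weighted arithmetic progression modulo $p$.
   Context: A set $S$ of non-negative integers contains no $r$-weighted arithmetic progression modulo $p$ if there do not exist pairwise distinct $s_1,s_2,s_3\in S$ and integers $0<x,y<r-1$ with $x+y<r$ such that $xs_1+ys_2\equiv(x+y)s_3\pmod p$. *)

theory Defs
  imports Main "HOL-Number_Theory.Cong"
begin

definition no_weighted_AP :: "nat \<Rightarrow> nat \<Rightarrow> nat set \<Rightarrow> bool" where
  "no_weighted_AP r p S \<longleftrightarrow>
     \<not> (\<exists>s1\<in>S. \<exists>s2\<in>S. \<exists>s3\<in>S. \<exists>x y :: int.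
          s1 \<noteq> s2 \<and> s1 \<noteq> s3 \<and> s2 \<noteq> s3 \<and>
          0 < x \<and> x < int r - 1 \<and> 0 < y \<and> y < int r - 1 \<and> x + y < int r \<and>
          [x * int s1 + y * int s2 = (x + y) * int s3] (mod int p))"

end

theory Submission
  imports Defs "HOL-Computational_Algebra.Primes"
begin

text \<open>Build the set greedily. A new residue \<open>s\<close> can only create a weighted progression
  together with two elements \<open>u, v\<close> of \<open>S\<close>, either as an outer term
  (\<open>x s + y u \<equiv> (x + y) v\<close>) or as the weighted mean (\<open>(x + y) s \<equiv> x u + y v\<close>). All weights lie
  strictly between \<open>0\<close> and \<open>r \<le> p\<close>, so each of these linear congruences has at most one
  solution modulo the prime \<open>p\<close>; hence at most \<open>2 |S|\<^sup>2 r\<^sup>2\<close> residues are excluded, and while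
  \<open>2 |S|\<^sup>2 r\<^sup>2 + |S| < p\<close> some residue outside \<open>S\<close> survives.\<close>

lemma card_linear_cong_solutions_le_1:
  fixes a b c :: int
  assumes "prime p" and "\<not> int p dvd a"
  shows "card {s. s < p \<and> [a * int s + c = b] (mod int p)} \<le> 1"
proof -
  have "coprime a (int p)"
    using assms prime_imp_coprime[of "int p" a] by (simp add: coprime_commute)
  have "s = t" if "s < p" "[a * int s + c = b] (mod int p)"
    and "t < p" "[a * int t + c = b] (mod int p)" for s t
  proof -
    have "[a * int s + c = a * int t + c] (mod int p)"
      using that by (meson cong_sym cong_trans)
    then have "[int s = int t] (mod int p)"
      using \<open>coprime a (int p)\<close> by (simp add: cong_add_rcancel cong_mult_lcancel)
    then show "s = t"
      using that cong_less_imp_eq_int[of "int s" "int p" "int t"] by simp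
  qed
  moreover have "finite {s. s < p \<and> [a * int s + c = b] (mod int p)}"
    by (rule finite_subset[of _ "{..<p}"]) auto
  ultimately show ?thesis
    by (simp add: card_le_Suc0_iff_eq)
qed

text \<open>The bounds \<open>x, y < r - 1\<close> of \<open>no_weighted_AP\<close> are implied by \<open>x + y < r\<close>.\<close>
definition weighted_AP_completions :: "nat \<Rightarrow> nat \<Rightarrow> nat set \<Rightarrow> nat set" where
  "weighted_AP_completions r p S =
     {s. s < p \<and> (\<exists>u\<in>S. \<exists>v\<in>S. \<exists>x\<in>{1..<int r}. \<exists>y\<in>{1..<int r}. x + y < int r \<and>
          ([x * int s + y * int u = (x + y) * int v] (mod int p) \<or>
           [(x + y) * int s = x * int u + y * int v] (mod int p)))}"

lemma weighted_AP_completionsI: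
  assumes "s < p" "u \<in> S" "v \<in> S" "0 < x" "0 < y" "x + y < int r"
    and "[x * int s + y * int u = (x + y) * int v] (mod int p) \<or>
         [(x + y) * int s = x * int u + y * int v] (mod int p)"
  shows "s \<in> weighted_AP_completions r p S"
  unfolding weighted_AP_completions_def mem_Collect_eq
  using assms by (intro conjI bexI[of _ u] bexI[of _ v] bexI[of _ x] bexI[of _ y]) auto

lemma no_weighted_AP_insert:
  assumes "no_weighted_AP r p S" and "s \<notin> weighted_AP_completions r p S" and "s < p"
  shows "no_weighted_AP r p (insert s S)"
  unfolding no_weighted_AP_def
proof
  assume "\<exists>s1\<in>insert s S. \<exists>s2\<in>insert s S. \<exists>s3\<in>insert s S. \<exists>x y :: int.
          s1 \<noteq> s2 \<and> s1 \<noteq> s3 \<and> s2 \<noteq> s3 \<and>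
          0 < x \<and> x < int r - 1 \<and> 0 < y \<and> y < int r - 1 \<and> x + y < int r \<and>
          [x * int s1 + y * int s2 = (x + y) * int s3] (mod int p)"
  then obtain s1 s2 s3 x y where
    mem: "s1 \<in> insert s S" "s2 \<in> insert s S" "s3 \<in> insert s S"
    and distinct: "s1 \<noteq> s2" "s1 \<noteq> s3" "s2 \<noteq> s3"
    and weights: "0 < x" "x < int r - 1" "0 < y" "y < int r - 1" "x + y < int r"
    and ap: "[x * int s1 + y * int s2 = (x + y) * int s3] (mod int p)"
    by blast
  consider "s1 \<in> S" "s2 \<in> S" "s3 \<in> S" | "s1 = s" "s2 \<in> S" "s3 \<in> S"
    | "s2 = s" "s1 \<in> S" "s3 \<in> S" | "s3 = s" "s1 \<in> S" "s2 \<in> S"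
    using mem distinct by auto
  then show False
  proof cases
    case 1
    then show False
      using assms(1) distinct weights ap unfolding no_weighted_AP_def by metis
  next
    case 2
    then show False
      using assms weights ap by (metis weighted_AP_completionsI)
  next
    case 3
    have "[y * int s + x * int s1 = (y + x) * int s3] (mod int p)"
      using ap 3 by (simp add: ac_simps)
    then show False
      using 3 assms weights by (metis add.commute weighted_AP_completionsI)
  next
    case 4
    have "[(x + y) * int s = x * int s1 + y * int s2] (mod int p)"
      using ap 4 by (simp add: cong_sym_eq)
    then show False
      using 4 assms weights by (metis weighted_AP_completionsI)
  qed
qed

lemma card_weighted_AP_completions_le:
  assumes "prime p" and "finite S" and "r \<le> p"
  shows "card (weighted_AP_completions r p S) \<le> 2 * card S ^ 2 * r ^ 2"
proof -
  define X where "X = {1..<int r}"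
  define I where "I = {(u, v, x, y). u \<in> S \<and> v \<in> S \<and> x \<in> X \<and> y \<in> X \<and> x + y < int r}"
  define A where "A = (\<lambda>(u, v, x, y).
    {s. s < p \<and> [x * int s + y * int u = (x + y) * int v] (mod int p)} \<union>
    {s. s < p \<and> [(x + y) * int s = x * int u + y * int v] (mod int p)})"
  have cover: "weighted_AP_completions r p S \<subseteq> (\<Union>i\<in>I. A i)"
    unfolding weighted_AP_completions_def I_def A_def X_def by fastforce
  have I_sub: "I \<subseteq> S \<times> S \<times> X \<times> X"
    unfolding I_def by auto
  have card_A: "card (A i) \<le> 2" if "i \<in> I" for i
  proof -
    obtain u v x y where i: "i = (u, v, x, y)" and weights: "0 < x" "0 < y" "x + y < int r"
      using \<open>i \<in> I\<close> unfolding I_def X_def by auto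
    have "\<not> int p dvd x" "\<not> int p dvd (x + y)"
      using weights assms(3) zdvd_not_zless[of x "int p"] zdvd_not_zless[of "x + y" "int p"]
      by auto
    from card_linear_cong_solutions_le_1[OF assms(1) this(1), where c = "y * int u"]
      card_linear_cong_solutions_le_1[OF assms(1) this(2), where c = 0]
    have solutions:
      "card {s. s < p \<and> [x * int s + y * int u = (x + y) * int v] (mod int p)} \<le> 1"
      "card {s. s < p \<and> [(x + y) * int s = x * int u + y * int v] (mod int p)} \<le> 1"
      by simp_all
    show ?thesis
      unfolding A_def i prod.case
      by (rule order.trans[OF card_Un_le]) (use solutions in linarith)
  qed
  have "card (weighted_AP_completions r p S) \<le> card (\<Union>i\<in>I. A i)"
    by (rule card_mono[OF finite_subset[of _ "{..<p}"] cover]) (auto simp: A_def)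
  also have "\<dots> \<le> (\<Sum>i\<in>I. card (A i))"
    using finite_subset[OF I_sub] assms(2) by (intro card_UN_le) (simp add: X_def)
  also have "\<dots> \<le> 2 * card I"
    using sum_mono[of I "\<lambda>i. card (A i)" "\<lambda>_. 2", OF card_A] by simp
  also have "card I \<le> card S * card S * card X * card X"
    using card_mono[OF _ I_sub] assms(2) by (simp add: X_def card_cartesian_product)
  also have "card X \<le> r"
    unfolding X_def by simp
  finally show ?thesis
    by (simp add: power2_eq_square mult_le_mono)
qed

lemma exists_no_weighted_AP_insert:
  assumes "prime p" and "S \<subseteq> {0..<p}" and "no_weighted_AP r p S" and "r \<le> p"
    and "2 * card S ^ 2 * r ^ 2 + card S < p"
  shows "\<exists>s<p. s \<notin> S \<and> no_weighted_AP r p (insert s S)"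
proof -
  have "finite S"
    using assms(2) finite_subset by blast
  moreover have "finite (weighted_AP_completions r p S)"
    by (rule finite_subset[of _ "{..<p}"]) (auto simp: weighted_AP_completions_def)
  moreover have "card (weighted_AP_completions r p S \<union> S) < card {0..<p}"
    using card_Un_le[of "weighted_AP_completions r p S" S]
      card_weighted_AP_completions_le[OF assms(1) \<open>finite S\<close> assms(4)] assms(5)
    by simp
  ultimately obtain s where "s \<in> {0..<p}" "s \<notin> weighted_AP_completions r p S \<union> S"
    by (metis card_mono finite_UnI not_le subsetI)
  then show ?thesis
    using no_weighted_AP_insert[OF assms(3)] by auto
qed

lemma exists_no_weighted_AP_of_card:
  assumes "prime p" and "r > 0" and "2 * n ^ 2 * r ^ 2 < p"
  shows "\<exists>S. S \<subseteq> {0..<p} \<and> card S = n \<and> no_weighted_AP r p S"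
  using assms(3)
proof (induction n)
  case 0
  show ?case
    by (rule exI[of _ "{}"]) (simp add: no_weighted_AP_def)
next
  case (Suc n)
  have "1 \<le> r ^ 2" and "r \<le> r ^ 2"
    using assms(2) by (simp_all add: power2_eq_square)
  moreover have "2 * Suc n ^ 2 * r ^ 2 = 2 * n ^ 2 * r ^ 2 + 4 * n * r ^ 2 + 2 * r ^ 2"
    by (simp add: power2_eq_square algebra_simps)
  moreover have "n \<le> 4 * n * r ^ 2"
    using \<open>1 \<le> r ^ 2\<close> by (simp add: mult_le_mono)
  ultimately have bounds: "2 * n ^ 2 * r ^ 2 < p" "2 * n ^ 2 * r ^ 2 + n < p" "r \<le> p"
    using Suc.prems by linarith+
  obtain S where S: "S \<subseteq> {0..<p}" "card S = n" "no_weighted_AP r p S"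
    using Suc.IH[OF bounds(1)] by blast
  then obtain s where "s < p" "s \<notin> S" "no_weighted_AP r p (insert s S)"
    using exists_no_weighted_AP_insert[OF assms(1) S(1) S(3) bounds(3)] bounds(2) by auto
  moreover have "finite S"
    using S(1) finite_subset by blast
  ultimately show ?case
    using S by (intro exI[of _ "insert s S"]) auto
qed

theorem theorem10:
  fixes r p k :: nat
  assumes "r > 0" and "prime p"
    and "p > 2 * k^2 * r^2"
    and "\<not> (p > 2 * (k + 1)^2 * r^2)"
  shows "\<exists>S. S \<subseteq> {0..<p} \<and> card S \<ge> k \<and> no_weighted_AP r p S"
  using exists_no_weighted_AP_of_card[OF assms(2) assms(1) assms(3)] by auto

end
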